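(* Let $\Sigma$ be a finite acyclic set of dependencies and let $\mathcal{D}$ and $\mathcal{D}'$ be databases with $\mathcal{D}'\subseteq\mathcal{D}$. Then $\mathcal{D}'$ is a repair of $\langle\Sigma,\mathcal{D}\rangle$ if and only if $\mathcal{D}'$ is consistent with $\Sigma$ and, for every $\alpha\in\mathcal{D}\setminus\mathcal{D}'$, the database $\mathcal{D}'\cup\{\alpha\}$ is inconsistent with $\Sigma$.
   Context: A signature is a set of predicate symbols with arities, always containing a special 0-ary predicate $\bot$. A term is a constant or a variable; a (predicate) atom is $p(t_1,\dots,t_n)$; an inequality is $t\neq t'$. A database is a finite set of ground atoms (facts) not containing $\bot$. A conjunction with inequalities is a conjunction of at least one predicate atom or inequality. A CQ is $\exists\vec y\,\gamma$ with $\gamma$ a conjunction with inequalities; a UCQ is a finite disjunction of CQs. A dependency is a first-order sentence $\forall\vec x\,(\gamma\rightarrow Q)$ where $\gamma$ (the body) is a conjunction with inequalities whose variables are in $\vec x$, each occurring in some predicate atom of $\gamma$, and $Q$ (the head) is a UCQ whose free variables are among $\vec x$ and in which every existentially quantified variable of each disjunct occurs in a predicate atom of that disjunct. $\mathcal{D}$ is consistent with $\Sigma$ if $\mathcal{D}$ satisfies every dependency of $\Sigma$. A repair of $\langle\Sigma,\mathcal{D}\rangle$ is an inclusion-maximal subset of $\mathcal{D}$ consistent with $\Sigma$. The dependency graph of $\Sigma$ has the dependencies of $\Sigma$ as vertices and an edge from $\tau_1$ to $\tau_2$ iff the head of $\tau_1$ contains an atom whose predicate appears in a predicate atom of the body of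 $\tau_2$; $\Sigma$ is acyclic if this graph has no cycle. *)

theory Defs
  imports Main
begin

datatype ('c, 'v) trm = Cst 'c | Vr 'v

datatype 'p pred = Bot | Pr 'p

fun arity :: "('p \<Rightarrow> nat) \<Rightarrow> 'p pred \<Rightarrow> nat" where
  "arity ar Bot = 0"
| "arity ar (Pr p) = ar p"

datatype ('p, 'c, 'v) lit = PAtom "'p pred" "('c, 'v) trm list" | Neq "('c, 'v) trm" "('c, 'v) trm"

(* A CQ  \<exists> ys. \<gamma>  : existentially quantified variables and a conjunction *)
type_synonym ('p, 'c, 'v) cq = "'v list \<times> ('p, 'c, 'v) lit list"

(* A dependency  \<forall> xs. (body \<rightarrow> head), head a UCQ (list of disjuncts) *)
datatype ('p, 'c, 'v) dep = Dep (uvars: "'v list") (body: "('p, 'c, 'v) lit list")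
                                (head: "('p, 'c, 'v) cq list")

type_synonym ('p, 'c) fact = "'p pred \<times> 'c list"

fun vars_trm :: "('c, 'v) trm \<Rightarrow> 'v set" where
  "vars_trm (Cst c) = {}"
| "vars_trm (Vr x) = {x}"

fun vars_lit :: "('p, 'c, 'v) lit \<Rightarrow> 'v set" where
  "vars_lit (PAtom p ts) = (\<Union>t\<in>set ts. vars_trm t)"
| "vars_lit (Neq s t) = vars_trm s \<union> vars_trm t"

definition vars_conj :: "('p, 'c, 'v) lit list \<Rightarrow> 'v set" where
  "vars_conj \<gamma> = (\<Union>l\<in>set \<gamma>. vars_lit l)"

definition atom_vars :: "('p, 'c, 'v) lit list \<Rightarrow> 'v set" where
  "atom_vars \<gamma> = (\<Union>p ts. if PAtom p ts \<in> set \<gamma> then (\<Union>t\<in>set ts. vars_trm t) else {})"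

definition preds_conj :: "('p, 'c, 'v) lit list \<Rightarrow> 'p pred set" where
  "preds_conj \<gamma> = {p. \<exists>ts. PAtom p ts \<in> set \<gamma>}"

fun wf_lit :: "('p \<Rightarrow> nat) \<Rightarrow> ('p, 'c, 'v) lit \<Rightarrow> bool" where
  "wf_lit ar (PAtom p ts) = (length ts = arity ar p)"
| "wf_lit ar (Neq s t) = True"

definition wf_conj :: "('p \<Rightarrow> nat) \<Rightarrow> ('p, 'c, 'v) lit list \<Rightarrow> bool" where
  "wf_conj ar \<gamma> = (\<gamma> \<noteq> [] \<and> (\<forall>l\<in>set \<gamma>. wf_lit ar l))"

definition wf_dep :: "('p \<Rightarrow> nat) \<Rightarrow> ('p, 'c, 'v) dep \<Rightarrow> bool" where
  "wf_dep ar \<tau> = (wf_conj ar (body \<tau>)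
     \<and> vars_conj (body \<tau>) \<subseteq> set (uvars \<tau>)
     \<and> vars_conj (body \<tau>) \<subseteq> atom_vars (body \<tau>)
     \<and> head \<tau> \<noteq> []
     \<and> (\<forall>(ys, \<gamma>)\<in>set (head \<tau>). wf_conj ar \<gamma>
            \<and> vars_conj \<gamma> - set ys \<subseteq> set (uvars \<tau>)
            \<and> set ys \<subseteq> atom_vars \<gamma>))"

definition is_db :: "('p \<Rightarrow> nat) \<Rightarrow> ('p, 'c) fact set \<Rightarrow> bool" where
  "is_db ar D = (finite D \<and> (\<forall>(p, cs)\<in>D. p \<noteq> Bot \<and> length cs = arity ar p))"

fun eval_trm :: "('v \<Rightarrow> 'c) \<Rightarrow> ('c, 'v) trm \<Rightarrow> 'c" where
  "eval_trm h (Cst c) = c"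
| "eval_trm h (Vr x) = h x"

fun holds_lit :: "('p, 'c) fact set \<Rightarrow> ('v \<Rightarrow> 'c) \<Rightarrow> ('p, 'c, 'v) lit \<Rightarrow> bool" where
  "holds_lit D h (PAtom p ts) = ((p, map (eval_trm h) ts) \<in> D)"
| "holds_lit D h (Neq s t) = (eval_trm h s \<noteq> eval_trm h t)"

definition holds_conj :: "('p, 'c) fact set \<Rightarrow> ('v \<Rightarrow> 'c) \<Rightarrow> ('p, 'c, 'v) lit list \<Rightarrow> bool" where
  "holds_conj D h \<gamma> = (\<forall>l\<in>set \<gamma>. holds_lit D h l)"

definition holds_cq :: "('p, 'c) fact set \<Rightarrow> ('v \<Rightarrow> 'c) \<Rightarrow> ('p, 'c, 'v) cq \<Rightarrow> bool" where
  "holds_cq D h q = (\<exists>g. (\<forall>x. x \<notin> set (fst q) \<longrightarrow> g x = h x) \<and> holds_conj D g (snd q))"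

definition sat_dep :: "('p, 'c) fact set \<Rightarrow> ('p, 'c, 'v) dep \<Rightarrow> bool" where
  "sat_dep D \<tau> = (\<forall>h. holds_conj D h (body \<tau>) \<longrightarrow> (\<exists>q\<in>set (head \<tau>). holds_cq D h q))"

definition consistent :: "('p, 'c, 'v) dep set \<Rightarrow> ('p, 'c) fact set \<Rightarrow> bool" where
  "consistent \<Sigma> D = (\<forall>\<tau>\<in>\<Sigma>. sat_dep D \<tau>)"

definition is_repair :: "('p, 'c, 'v) dep set \<Rightarrow> ('p, 'c) fact set \<Rightarrow> ('p, 'c) fact set \<Rightarrow> bool" where
  "is_repair \<Sigma> D R = (R \<subseteq> D \<and> consistent \<Sigma> R
      \<and> (\<forall>R'. R \<subset> R' \<and> R' \<subseteq> D \<longrightarrow> \<not> consistent \<Sigma> R'))"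

definition head_preds :: "('p, 'c, 'v) dep \<Rightarrow> 'p pred set" where
  "head_preds \<tau> = (\<Union>q\<in>set (head \<tau>). preds_conj (snd q))"

definition dep_graph :: "('p, 'c, 'v) dep set \<Rightarrow> (('p, 'c, 'v) dep \<times> ('p, 'c, 'v) dep) set" where
  "dep_graph \<Sigma> = {(\<tau>1, \<tau>2). \<tau>1 \<in> \<Sigma> \<and> \<tau>2 \<in> \<Sigma> \<and> head_preds \<tau>1 \<inter> preds_conj (body \<tau>2) \<noteq> {}}"

definition acyclic_deps :: "('p, 'c, 'v) dep set \<Rightarrow> bool" where
  "acyclic_deps \<Sigma> = acyclic (dep_graph \<Sigma>)"

end

theory Submission
  imports Defs
begin

(* Suppose D' is consistent, no single fact of D - D' can be added to it, and yet some
   consistent R with D' \<subset> R \<subseteq> D exists. Adding a new fact \<alpha> of R to D' violates a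
   dependency \<tau> whose body must use \<alpha>; since R satisfies \<tau>, some head disjunct of \<tau> is
   witnessed in R by a further new fact \<beta>, so \<tau> has an edge to the dependency violated by
   adding \<beta>. Every dependency reached this way has a successor, which is impossible in a
   finite acyclic dependency graph. *)

lemma holds_lit_mono: "holds_lit D h l \<Longrightarrow> D \<subseteq> E \<Longrightarrow> holds_lit E h l"
  by (cases l) auto

lemma holds_conj_mono: "holds_conj D h \<gamma> \<Longrightarrow> D \<subseteq> E \<Longrightarrow> holds_conj E h \<gamma>"
  unfolding holds_conj_def using holds_lit_mono by blast

lemma holds_cq_mono: "holds_cq D h q \<Longrightarrow> D \<subseteq> E \<Longrightarrow> holds_cq E h q"
  unfolding holds_cq_def using holds_conj_mono by blast

lemma holds_conj_diff_fact:
  assumes "holds_conj R h \<gamma>" and "\<not> holds_conj E h \<gamma>"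
  shows "\<exists>\<beta>\<in>R - E. fst \<beta> \<in> preds_conj \<gamma>"
proof -
  obtain l where l: "l \<in> set \<gamma>" "holds_lit R h l" "\<not> holds_lit E h l"
    using assms unfolding holds_conj_def by blast
  obtain p ts where "l = PAtom p ts"
    using l(2,3) by (cases l) auto
  with l show ?thesis
    unfolding preds_conj_def by force
qed

lemma inconsistent_insertE:
  assumes "consistent \<Sigma> D" and "\<not> consistent \<Sigma> (insert \<alpha> D)"
  obtains \<tau> h where "\<tau> \<in> \<Sigma>" "fst \<alpha> \<in> preds_conj (body \<tau>)"
    and "holds_conj (insert \<alpha> D) h (body \<tau>)"
    and "\<forall>q\<in>set (head \<tau>). \<not> holds_cq (insert \<alpha> D) h q"
proof -
  obtain \<tau> h where \<tau>: "\<tau> \<in> \<Sigma>" and body: "holds_conj (insert \<alpha> D) h (body \<tau>)"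
    and no_head: "\<forall>q\<in>set (head \<tau>). \<not> holds_cq (insert \<alpha> D) h q"
    using assms(2) unfolding consistent_def sat_dep_def by blast
  have "\<not> holds_conj D h (body \<tau>)"
    using assms(1) \<tau> no_head holds_cq_mono[of D h _ "insert \<alpha> D"]
    unfolding consistent_def sat_dep_def by blast
  then have "fst \<alpha> \<in> preds_conj (body \<tau>)"
    using holds_conj_diff_fact[OF body] by blast
  with \<tau> body no_head that show ?thesis by blast
qed

lemma consistent_superset_head_fact:
  assumes "consistent \<Sigma> R" and "E \<subseteq> R" and "\<tau> \<in> \<Sigma>"
    and "holds_conj E h (body \<tau>)" and "\<forall>q\<in>set (head \<tau>). \<not> holds_cq E h q"
  shows "\<exists>\<beta>\<in>R - E. fst \<beta> \<in> head_preds \<tau>"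
proof -
  obtain q where q: "q \<in> set (head \<tau>)" "holds_cq R h q"
    using assms(1-4) holds_conj_mono unfolding consistent_def sat_dep_def by blast
  then obtain g where g: "\<forall>x. x \<notin> set (fst q) \<longrightarrow> g x = h x" "holds_conj R g (snd q)"
    unfolding holds_cq_def by blast
  have "\<not> holds_conj E g (snd q)"
    using assms(5) q(1) g(1) unfolding holds_cq_def by blast
  with q(1) show ?thesis
    using holds_conj_diff_fact[OF g(2)] unfolding head_preds_def by blast
qed

lemma new_fact_triggers_dependency:
  assumes "consistent \<Sigma> D'" and "consistent \<Sigma> R" and "D' \<subseteq> R" and "\<alpha> \<in> R - D'"
    and "\<not> consistent \<Sigma> (insert \<alpha> D')"
  shows "\<exists>\<tau>\<in>\<Sigma>. fst \<alpha> \<in> preds_conj (body \<tau>) \<and> (\<exists>\<beta>\<in>R - D'. fst \<beta> \<in> head_preds \<tau>)"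
proof -
  obtain \<tau> h where \<tau>: "\<tau> \<in> \<Sigma>" "fst \<alpha> \<in> preds_conj (body \<tau>)"
    and body: "holds_conj (insert \<alpha> D') h (body \<tau>)"
    and no_head: "\<forall>q\<in>set (head \<tau>). \<not> holds_cq (insert \<alpha> D') h q"
    using inconsistent_insertE[OF assms(1,5)] by blast
  have "insert \<alpha> D' \<subseteq> R"
    using assms(3,4) by blast
  then have "\<exists>\<beta>\<in>R - insert \<alpha> D'. fst \<beta> \<in> head_preds \<tau>"
    using consistent_superset_head_fact[OF assms(2) _ \<tau>(1) body no_head] by blast
  with \<tau> show ?thesis by blast
qed

lemma finite_dep_graph: "finite \<Sigma> \<Longrightarrow> finite (dep_graph \<Sigma>)"
  by (rule finite_subset[of _ "\<Sigma> \<times> \<Sigma>"]) (auto simp: dep_graph_def)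

lemma finite_acyclic_ex_sink:
  assumes "finite r" and "acyclic r" and "S \<noteq> {}"
  shows "\<exists>x\<in>S. \<forall>y\<in>S. (x, y) \<notin> r"
proof -
  obtain x where "x \<in> S" and "\<And>y. (y, x) \<in> r\<inverse> \<Longrightarrow> y \<notin> S"
    by (rule wfE_min'[OF finite_acyclic_wf_converse[OF assms(1,2)] assms(3)]) (rule that)
  then show ?thesis by blast
qed

lemma acyclic_no_consistent_extension:
  assumes "finite \<Sigma>" and "acyclic_deps \<Sigma>"
    and "consistent \<Sigma> D'" and "consistent \<Sigma> R" and "D' \<subseteq> R"
    and maximal: "\<forall>\<alpha>\<in>R - D'. \<not> consistent \<Sigma> (insert \<alpha> D')"
  shows "R = D'"
proof (rule ccontr)
  assume "R \<noteq> D'"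
  have trigger: "\<exists>\<tau>\<in>\<Sigma>. fst \<alpha> \<in> preds_conj (body \<tau>) \<and> (\<exists>\<beta>\<in>R - D'. fst \<beta> \<in> head_preds \<tau>)"
    if "\<alpha> \<in> R - D'" for \<alpha>
    using new_fact_triggers_dependency[OF assms(3-5) that] maximal that by blast
  define S where "S = {\<tau>\<in>\<Sigma>. \<exists>\<beta>\<in>R - D'. fst \<beta> \<in> head_preds \<tau>}"
  have "S \<noteq> {}"
    using \<open>R \<noteq> D'\<close> \<open>D' \<subseteq> R\<close> trigger unfolding S_def by blast
  moreover have "acyclic (dep_graph \<Sigma>)"
    using assms(2) unfolding acyclic_deps_def .
  ultimately obtain \<tau> where "\<tau> \<in> S" and sink: "\<forall>\<tau>'\<in>S. (\<tau>, \<tau>') \<notin> dep_graph \<Sigma>"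
    using finite_acyclic_ex_sink[OF finite_dep_graph[OF assms(1)]] by blast
  then obtain \<beta> where \<beta>: "\<beta> \<in> R - D'" "fst \<beta> \<in> head_preds \<tau>" and "\<tau> \<in> \<Sigma>"
    unfolding S_def by blast
  with trigger[OF \<beta>(1)] sink show False
    unfolding S_def dep_graph_def by blast
qed

theorem proposition2:
  fixes ar :: "'p \<Rightarrow> nat"
    and \<Sigma> :: "('p, 'c, 'v) dep set"
    and D D' :: "('p, 'c) fact set"
  assumes "finite \<Sigma>"
    and "\<forall>\<tau>\<in>\<Sigma>. wf_dep ar \<tau>"
    and "acyclic_deps \<Sigma>"
    and "is_db ar D"
    and "is_db ar D'"
    and "D' \<subseteq> D"
  shows "is_repair \<Sigma> D D' \<longleftrightarrow>
           (consistent \<Sigma> D' \<and> (\<forall>\<alpha>\<in>D - D'. \<not> consistent \<Sigma> (insert \<alpha> D')))"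
proof
  assume "is_repair \<Sigma> D D'"
  then show "consistent \<Sigma> D' \<and> (\<forall>\<alpha>\<in>D - D'. \<not> consistent \<Sigma> (insert \<alpha> D'))"
    unfolding is_repair_def by blast
next
  assume maximal: "consistent \<Sigma> D' \<and> (\<forall>\<alpha>\<in>D - D'. \<not> consistent \<Sigma> (insert \<alpha> D'))"
  have "R = D'" if "consistent \<Sigma> R" "D' \<subseteq> R" "R \<subseteq> D" for R
    using acyclic_no_consistent_extension[OF assms(1,3) _ that(1,2)] maximal that(3) by blast
  with maximal assms(6) show "is_repair \<Sigma> D D'"
    unfolding is_repair_def by blast
qed

end
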